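(* Let $a$ be a strongly regular scale factor (extended evenly to negative arguments). Then the function \[ g_{\tau\tau}(\tau,\rho)=-\big[1-\dot a(\tau)\,f(\tau,t_0(\tau,\rho))\big]^2 \] is continuous on $D=\{(\tau,\rho):\tau>0,\ 0<\rho<2\rho_{\mathcal M_\tau}\}$.
   Context: A function $a:[0,\infty)\to[0,\infty)$ is a regular scale factor if: (a) $a(0)=0$; (b) $a$ is increasing and continuous on $[0,\infty)$, twice continuously differentiable on $(0,\infty)$, with an inverse function on $[0,\infty)$; (c) $\frac{a(t)\ddot a(t)}{\dot a(t)^2}\le1$ for all $t>0$ (presupposing $\dot a(t)\ne0$). It is strongly regular if also $\frac{a\ddot a}{\dot a^2}\ge-K$ on $(0,\infty)$ for a constant $K\ge1$. Extend $a$ by $a(-t)=a(t)$. For $\tau>0$ let $\rho_{\mathcal M_\tau}=\int_0^\tau\frac{a(t)}{\sqrt{a^2(\tau)-a^2(t)}}dt$. For $(\tau,\rho)\in D$, $t_0(\tau,\rho)$ is the unique $t_0\in(-\tau,\tau)$ with $\rho=\int_{t_0}^\tau\frac{a(t)}{\sqrt{a^2(\tau)-a^2(t)}}dt$. For $0\le t_0<\tau$, \[ f(\tau,t_0)=\int_{t_0}^{\tau}\frac{\ddot a(t)}{\dot a(t)^2}\left(\frac{\sqrt{a^2(\tau)-a^2(t_0)}}{\sqrt{a^2(\tau)-a^2(t)}}-1\right)dt, \] and for $-\tau<t_0<0$, $f(\tau,t_0)=2f(\tau,0)-f(\tau,-t_0)$. *)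

theory Defs
  imports "HOL-Analysis.Analysis"
begin

definition regular_scale_factor :: "(real \<Rightarrow> real) \<Rightarrow> bool" where
  "regular_scale_factor a \<longleftrightarrow>
     a 0 = 0 \<and>
     (\<forall>t\<ge>0. a t \<ge> 0) \<and>
     strict_mono_on {0..} a \<and>
     continuous_on {0..} a \<and>
     (\<forall>t>0. (a has_real_derivative deriv a t) (at t)) \<and>
     (\<forall>t>0. (deriv a has_real_derivative deriv (deriv a) t) (at t)) \<and>
     continuous_on {0<..} (deriv (deriv a)) \<and>
     (\<forall>t>0. deriv a t \<noteq> 0) \<and>
     (\<forall>t>0. a t * deriv (deriv a) t / (deriv a t)\<^sup>2 \<le> 1)"

definition strongly_regular_scale_factor :: "(real \<Rightarrow> real) \<Rightarrow> bool" where
  "strongly_regular_scale_factor a \<longleftrightarrow>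
     regular_scale_factor a \<and>
     (\<exists>K\<ge>1. \<forall>t>0. a t * deriv (deriv a) t / (deriv a t)\<^sup>2 \<ge> - K)"

definition aext :: "(real \<Rightarrow> real) \<Rightarrow> real \<Rightarrow> real" where
  "aext a t = a \<bar>t\<bar>"

text \<open>Integral of a(t)/sqrt(a(tau)^2-a(t)^2) from s to tau (improper at tau; HK integral).\<close>
definition rho_int :: "(real \<Rightarrow> real) \<Rightarrow> real \<Rightarrow> real \<Rightarrow> real" where
  "rho_int a \<tau> s = integral {s..\<tau>}
      (\<lambda>t. aext a t / sqrt ((aext a \<tau>)\<^sup>2 - (aext a t)\<^sup>2))"

definition rho_M :: "(real \<Rightarrow> real) \<Rightarrow> real \<Rightarrow> real" where
  "rho_M a \<tau> = rho_int a \<tau> 0"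

definition domD :: "(real \<Rightarrow> real) \<Rightarrow> (real \<times> real) set" where
  "domD a = {(\<tau>, \<rho>). \<tau> > 0 \<and> 0 < \<rho> \<and> \<rho> < 2 * rho_M a \<tau>}"

definition t0 :: "(real \<Rightarrow> real) \<Rightarrow> real \<Rightarrow> real \<Rightarrow> real" where
  "t0 a \<tau> \<rho> = (THE s. s \<in> {-\<tau><..<\<tau>} \<and> \<rho> = rho_int a \<tau> s)"

definition f_pos :: "(real \<Rightarrow> real) \<Rightarrow> real \<Rightarrow> real \<Rightarrow> real" where
  "f_pos a \<tau> s = integral {s..\<tau>}
      (\<lambda>t. deriv (deriv a) t / (deriv a t)\<^sup>2 *
           (sqrt ((a \<tau>)\<^sup>2 - (a s)\<^sup>2) / sqrt ((a \<tau>)\<^sup>2 - (a t)\<^sup>2) - 1))"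

definition f :: "(real \<Rightarrow> real) \<Rightarrow> real \<Rightarrow> real \<Rightarrow> real" where
  "f a \<tau> s = (if s \<ge> 0 then f_pos a \<tau> s else 2 * f_pos a \<tau> 0 - f_pos a \<tau> (- s))"

definition g_tautau :: "(real \<Rightarrow> real) \<Rightarrow> real \<times> real \<Rightarrow> real" where
  "g_tautau a = (\<lambda>(\<tau>, \<rho>). - (1 - deriv a \<tau> * f a \<tau> (t0 a \<tau> \<rho>))\<^sup>2)"

end

theory Submission
  imports Defs
begin

text \<open>
  Both \<open>\<rho>(\<tau>, s) = \<integral>\<^sub>s\<^sup>\<tau> a(t) / sqrt (a(\<tau>)\<^sup>2 - a(t)\<^sup>2) dt\<close> and \<open>f(\<tau>, s)\<close> are jointly
  continuous on \<open>0 \<le> s < \<tau>\<close>: after rescaling the integration interval to \<open>(0, 1)\<close>, the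
  integrands are bounded by \<open>C / sqrt (1 - x)\<close> locally uniformly in \<open>(\<tau>, s)\<close>, because
  \<open>a(\<tau>)\<^sup>2 - a(t)\<^sup>2 \<ge> k (\<tau> - t)\<close> locally and, by strong regularity, \<open>|a''/a'\<^sup>2| \<le> K / a\<close>;
  so dominated convergence applies. Reflection formulas extend both functions to \<open>|s| < \<tau>\<close>.
  Since \<open>\<rho>(\<tau>, s)\<close> is moreover strictly decreasing in \<open>s\<close>, its inverse \<open>t\<^sub>0(\<tau>, \<rho>)\<close> is
  continuous, and \<open>g\<^sub>\<tau>\<^sub>\<tau>\<close> is a composition of continuous maps.
\<close>

section \<open>Parametric integrals with an inverse square root singularity\<close>

lemma has_integral_inv_sqrt_one_minus: "((\<lambda>x::real. 1 / sqrt (1 - x)) has_integral 2) {0<..<1}"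
proof -
  have "((\<lambda>x::real. 1 / sqrt (1 - x)) has_integral (- 2 * sqrt (1 - 1)) - (- 2 * sqrt (1 - 0))) {0..1}"
  proof (rule fundamental_theorem_of_calculus_interior)
    show "continuous_on {0..1} (\<lambda>x::real. - 2 * sqrt (1 - x))"
      by (intro continuous_intros)
    fix x :: real assume "x \<in> {0<..<1}"
    then show "((\<lambda>x. - 2 * sqrt (1 - x)) has_vector_derivative 1 / sqrt (1 - x)) (at x)"
      unfolding has_real_derivative_iff_has_vector_derivative[symmetric]
      by (auto intro!: derivative_eq_intros simp: field_simps)
  qed simp
  then show ?thesis
    using has_integral_open_interval[of _ _ 0 "1::real"] by auto
qed

lemma
  fixes h :: "'p::metric_space \<Rightarrow> 'a::euclidean_space \<Rightarrow> real"
  assumes S: "S \<in> sets lebesgue" and g: "g integrable_on S"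
    and cont_x: "\<And>p. p \<in> U \<Longrightarrow> continuous_on S (h p)"
    and cont_p: "\<And>x. x \<in> S \<Longrightarrow> continuous_on U (\<lambda>p. h p x)"
    and dominated: "\<And>p0. p0 \<in> U \<Longrightarrow>
      \<exists>e>0. \<exists>C. \<forall>p\<in>U. dist p p0 < e \<longrightarrow> (\<forall>x\<in>S. \<bar>h p x\<bar> \<le> C * g x)"
  shows integrable_on_locally_dominated: "\<And>p. p \<in> U \<Longrightarrow> h p integrable_on S"
    and continuous_on_integral_locally_dominated: "continuous_on U (\<lambda>p. integral S (h p))"
proof -
  show integrable: "h p integrable_on S" if p: "p \<in> U" for p
  proof -
    obtain e C where "e > 0" and "\<forall>q\<in>U. dist q p < e \<longrightarrow> (\<forall>x\<in>S. \<bar>h q x\<bar> \<le> C * g x)"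
      using dominated[OF p] by blast
    then have "\<And>x. x \<in> S \<Longrightarrow> \<bar>h p x\<bar> \<le> C * g x" using p by simp
    moreover have "(\<lambda>x. C * g x) integrable_on S"
      using integrable_on_cmult_left[OF g] by simp
    ultimately show ?thesis
      using measurable_bounded_by_integrable_imp_integrable_real
        [OF continuous_imp_measurable_on_sets_lebesgue[OF cont_x[OF p] S] _ _ S] by blast
  qed
  show "continuous_on U (\<lambda>p. integral S (h p))"
  proof (rule continuous_on_sequentiallyI)
    fix u p0 assume u: "\<forall>n. u n \<in> U" and p0: "p0 \<in> U" and lim: "u \<longlonglongrightarrow> p0"
    obtain e C where "e > 0" and bound: "\<forall>q\<in>U. dist q p0 < e \<longrightarrow> (\<forall>x\<in>S. \<bar>h q x\<bar> \<le> C * g x)"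
      using dominated[OF p0] by blast
    obtain N where N: "\<forall>n\<ge>N. dist (u n) p0 < e"
      using lim \<open>e > 0\<close> unfolding LIMSEQ_def by blast
    have "(\<lambda>k. integral S (h (u (k + N)))) \<longlonglongrightarrow> integral S (h p0)"
    proof (rule dominated_convergence(2))
      show "h (u (k + N)) integrable_on S" for k using integrable u by blast
      show "(\<lambda>x. C * g x) integrable_on S" using integrable_on_cmult_left[OF g] by simp
      show "norm (h (u (k + N)) x) \<le> C * g x" if "x \<in> S" for k x
        using bound u N that by auto
      show "(\<lambda>k. h (u (k + N)) x) \<longlonglongrightarrow> h p0 x" if "x \<in> S" for x
      proof -
        have "(\<lambda>k. h (u k) x) \<longlonglongrightarrow> h p0 x"
          using cont_p[OF that] u p0 lim unfolding continuous_on_sequentially comp_def by blast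
        then show ?thesis by (rule LIMSEQ_ignore_initial_segment)
      qed
    qed
    then show "(\<lambda>n. integral S (h (u n))) \<longlonglongrightarrow> integral S (h p0)"
      by (rule LIMSEQ_offset)
  qed
qed

lemma has_integral_from_unit_interval:
  fixes \<phi> :: "real \<Rightarrow> real"
  assumes st: "s < \<tau>" and h: "((\<lambda>x. (\<tau> - s) * \<phi> (s + (\<tau> - s) * x)) has_integral J) {0..1}"
  shows "(\<phi> has_integral J) {s..\<tau>}"
proof -
  define m where "m = 1 / (\<tau> - s)"
  define c where "c = - s / (\<tau> - s)"
  have m: "m > 0" using st by (simp add: m_def)
  from has_integral_affinity'[OF h[unfolded cbox_interval[symmetric]] m, of c]
  have "((\<lambda>y. (\<tau> - s) * \<phi> (s + (\<tau> - s) * (m * y + c))) has_integral J / m)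
      (cbox ((0 - c) / m) ((1 - c) / m))"
    by (simp add: divide_inverse mult.commute)
  moreover have "s + (\<tau> - s) * (m * y + c) = y" for y
  proof -
    have "m * y + c = (y - s) / (\<tau> - s)" by (simp add: m_def c_def diff_divide_distrib)
    then show ?thesis using st by simp
  qed
  moreover have "(0 - c) / m = s" "(1 - c) / m = \<tau>"
    using st by (simp_all add: m_def c_def field_simps)
  ultimately have "((\<lambda>y. (\<tau> - s) * \<phi> y) has_integral (\<tau> - s) * J) {s..\<tau>}"
    by (simp add: m_def mult.commute)
  from has_integral_mult_right[OF this, of "1 / (\<tau> - s)"] show ?thesis
    using st by simp
qed

lemma affine_in_open_segment:
  fixes s \<tau> x :: real
  assumes "s < \<tau>" "0 < x" "x < 1"
  shows "s < s + (\<tau> - s) * x" "s + (\<tau> - s) * x < \<tau>"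
proof -
  have "0 < (\<tau> - s) * x" using assms by simp
  moreover have "(\<tau> - s) * x < (\<tau> - s) * 1" using assms by (intro mult_strict_left_mono) auto
  ultimately show "s < s + (\<tau> - s) * x" "s + (\<tau> - s) * x < \<tau>" by auto
qed

lemma
  fixes F :: "real \<times> real \<Rightarrow> real \<Rightarrow> real"
  assumes U: "\<And>p. p \<in> U \<Longrightarrow> snd p < fst p"
    and cont: "continuous_on {(p, t). p \<in> U \<and> snd p < t \<and> t < fst p} (\<lambda>(p, t). F p t)"
    and dominated: "\<And>p0. p0 \<in> U \<Longrightarrow> \<exists>e>0. \<exists>C. \<forall>p\<in>U. dist p p0 < e \<longrightarrow>
      (\<forall>x\<in>{0<..<1}. \<bar>(fst p - snd p) * F p (snd p + (fst p - snd p) * x)\<bar> \<le> C / sqrt (1 - x))"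
  shows integrable_on_segment_dominated: "\<And>p. p \<in> U \<Longrightarrow> F p integrable_on {snd p..fst p}"
    and continuous_on_integral_segment_dominated:
      "continuous_on U (\<lambda>p. integral {snd p..fst p} (F p))"
proof -
  define G where "G p x = (fst p - snd p) * F p (snd p + (fst p - snd p) * x)" for p x
  have image: "(p, snd p + (fst p - snd p) * x) \<in> {(p, t). p \<in> U \<and> snd p < t \<and> t < fst p}"
    if "p \<in> U" "x \<in> {0<..<1}" for p x
    using affine_in_open_segment[OF U] that by auto
  have cont_x: "continuous_on {0<..<1} (G p)" if p: "p \<in> U" for p
    unfolding G_def using image[OF p]
    by (intro continuous_intros continuous_on_compose2[OF cont,
        where f = "\<lambda>x. (p, snd p + (fst p - snd p) * x)", simplified]) auto
  have cont_p: "continuous_on U (\<lambda>p. G p x)" if x: "x \<in> {0<..<1}" for x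
    unfolding G_def using image[OF _ x]
    by (intro continuous_intros continuous_on_compose2[OF cont,
        where f = "\<lambda>p. (p, snd p + (fst p - snd p) * x)", simplified]) auto
  have dominated_G: "\<exists>e>0. \<exists>C. \<forall>p\<in>U. dist p p0 < e \<longrightarrow>
      (\<forall>x\<in>{0<..<1}. \<bar>G p x\<bar> \<le> C * (1 / sqrt (1 - x)))" if "p0 \<in> U" for p0
    using dominated[OF that] by (simp add: G_def)
  have lebesgue: "{0<..<1::real} \<in> sets lebesgue" by simp
  note inv_sqrt = has_integral_integrable[OF has_integral_inv_sqrt_one_minus]
  have integral_eq: "(F p has_integral integral {0<..<1} (G p)) {snd p..fst p}" if p: "p \<in> U" for p
  proof (rule has_integral_from_unit_interval[OF U[OF p]])
    have "(G p has_integral integral {0<..<1} (G p)) {0<..<1}"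
      using integrable_on_locally_dominated[OF lebesgue inv_sqrt cont_x cont_p dominated_G p]
      by (simp add: integrable_integral)
    then have "(G p has_integral integral {0<..<1} (G p)) {0..1}"
      using has_integral_open_interval[of _ _ 0 "1::real"] by auto
    then show "((\<lambda>x. (fst p - snd p) * F p (snd p + (fst p - snd p) * x))
        has_integral integral {0<..<1} (G p)) {0..1}"
      unfolding G_def .
  qed
  then show "F p integrable_on {snd p..fst p}" if "p \<in> U" for p
    using that by blast
  from continuous_on_integral_locally_dominated[OF lebesgue inv_sqrt cont_x cont_p dominated_G]
  show "continuous_on U (\<lambda>p. integral {snd p..fst p} (F p))"
  proof (rule continuous_on_eq)
    fix p assume "p \<in> U"
    from integral_unique[OF integral_eq[OF this]]
    show "integral {0<..<1} (G p) = integral {snd p..fst p} (F p)" by simp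
  qed
qed

section \<open>Decreasing families and reflection on the wedge\<close>

lemma eventually_section_in_open:
  fixes R :: "real \<times> real \<Rightarrow> real"
  assumes W: "open W" and R: "continuous_on W R" and c: "(fst q0, c) \<in> W"
    and A: "open A" "R (fst q0, c) - snd q0 \<in> A"
  shows "\<forall>\<^sub>F q in at q0 within X. (fst q, c) \<in> W \<and> R (fst q, c) - snd q \<in> A"
proof -
  have lim: "((\<lambda>q. (fst q, c)) \<longlongrightarrow> (fst q0, c)) (at q0 within X)"
    by (intro tendsto_intros)
  have "isCont R (fst q0, c)" using R W c continuous_on_eq_continuous_at by blast
  then have "((\<lambda>q. R (fst q, c) - snd q) \<longlongrightarrow> R (fst q0, c) - snd q0) (at q0 within X)"
    by (intro tendsto_intros isCont_tendsto_compose[OF _ lim])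
  from eventually_conj[OF topological_tendstoD[OF lim W c] topological_tendstoD[OF this A]]
  show ?thesis .
qed

lemma continuous_on_implicit_decreasing:
  fixes R :: "real \<times> real \<Rightarrow> real" and \<sigma> :: "real \<times> real \<Rightarrow> real"
  assumes W: "open W" and R: "continuous_on W R"
    and decreasing: "\<And>\<tau> s s'. (\<tau>, s) \<in> W \<Longrightarrow> (\<tau>, s') \<in> W \<Longrightarrow> s < s' \<Longrightarrow> R (\<tau>, s') < R (\<tau>, s)"
    and solves: "\<And>q. q \<in> X \<Longrightarrow> (fst q, \<sigma> q) \<in> W \<and> R (fst q, \<sigma> q) = snd q"
  shows "continuous_on X \<sigma>"
  unfolding continuous_on_def
proof (intro ballI tendstoI)
  fix q0 and e :: real assume q0: "q0 \<in> X" and e: "e > 0"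
  define s0 where "s0 = \<sigma> q0"
  have s0: "(fst q0, s0) \<in> W" "R (fst q0, s0) = snd q0" using solves[OF q0] by (simp_all add: s0_def)
  obtain r where r: "r > 0" "ball (fst q0, s0) r \<subseteq> W" using W s0(1) open_contains_ball by blast
  define \<epsilon> where "\<epsilon> = min e r / 2"
  have \<epsilon>: "0 < \<epsilon>" "\<epsilon> < e" "\<epsilon> < r" using e r by (auto simp: \<epsilon>_def)
  have W_pm: "(fst q0, s0 - \<epsilon>) \<in> W" "(fst q0, s0 + \<epsilon>) \<in> W"
    using r \<epsilon> by (auto simp: dist_Pair_Pair dist_real_def intro!: subsetD[OF r(2)])
  have sides: "snd q0 < R (fst q0, s0 - \<epsilon>)" "R (fst q0, s0 + \<epsilon>) < snd q0"
    using decreasing[OF W_pm(1) s0(1)] decreasing[OF s0(1) W_pm(2)] s0(2) \<epsilon> by auto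
  have "\<forall>\<^sub>F q in at q0 within X. (fst q, s0 - \<epsilon>) \<in> W \<and> R (fst q, s0 - \<epsilon>) - snd q \<in> {0<..}"
    using W_pm sides by (intro eventually_section_in_open[OF W R]) auto
  moreover have "\<forall>\<^sub>F q in at q0 within X. (fst q, s0 + \<epsilon>) \<in> W \<and> R (fst q, s0 + \<epsilon>) - snd q \<in> {..<0}"
    using W_pm sides by (intro eventually_section_in_open[OF W R]) auto
  moreover have "\<forall>\<^sub>F q in at q0 within X. q \<in> X" by (simp add: eventually_at_filter)
  ultimately show "\<forall>\<^sub>F q in at q0 within X. dist (\<sigma> q) (\<sigma> q0) < e"
  proof eventually_elim
    case (elim q)
    then have q: "(fst q, \<sigma> q) \<in> W" "R (fst q, \<sigma> q) = snd q" using solves by auto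
    have "s0 - \<epsilon> < \<sigma> q"
    proof (rule ccontr)
      assume "\<not> s0 - \<epsilon> < \<sigma> q"
      then show False
        using decreasing[OF q(1), of "s0 - \<epsilon>"] elim q(2) by (cases "\<sigma> q = s0 - \<epsilon>") auto
    qed
    moreover have "\<sigma> q < s0 + \<epsilon>"
    proof (rule ccontr)
      assume "\<not> \<sigma> q < s0 + \<epsilon>"
      then show False
        using decreasing[OF _ q(1), of "s0 + \<epsilon>"] elim q(2) by (cases "\<sigma> q = s0 + \<epsilon>") auto
    qed
    ultimately show ?case using \<epsilon> by (simp add: s0_def dist_real_def abs_less_iff)
  qed
qed

definition wedge :: "(real \<times> real) set" where
  "wedge = {p. \<bar>snd p\<bar> < fst p}"

definition half_wedge :: "(real \<times> real) set" where
  "half_wedge = {p. 0 \<le> snd p \<and> snd p < fst p}"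

lemma fst_mem_if_dist_less:
  fixes p p0 :: "real \<times> real"
  assumes "dist p p0 < fst p0 / 2"
  shows "fst p \<in> {fst p0 / 2..2 * fst p0}"
proof -
  have "\<bar>fst p - fst p0\<bar> < fst p0 / 2" using assms dist_fst_le[of p p0] by (simp add: dist_real_def)
  then have "fst p0 / 2 < fst p" "fst p < 2 * fst p0" by linarith+
  then show ?thesis by auto
qed

lemma open_wedge: "open wedge"
  unfolding wedge_def by (intro open_Collect_less continuous_intros)

lemma continuous_on_wedge_reflect:
  fixes F :: "real \<times> real \<Rightarrow> real"
  assumes F: "continuous_on half_wedge F"
  shows "continuous_on wedge (\<lambda>p. if 0 \<le> snd p then F p else 2 * F (fst p, 0) - F (fst p, - snd p))"
proof -
  have "continuous_on wedge (\<lambda>p. if - snd p \<le> 0 then F p else 2 * F (fst p, 0) - F (fst p, - snd p))"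
  proof (rule continuous_on_cases_le)
    show "continuous_on {p \<in> wedge. - snd p \<le> 0} F"
      by (rule continuous_on_subset[OF F]) (auto simp: wedge_def half_wedge_def)
    show "continuous_on {p \<in> wedge. 0 \<le> - snd p} (\<lambda>p. 2 * F (fst p, 0) - F (fst p, - snd p))"
      by (intro continuous_intros continuous_on_compose2[OF F]) (auto simp: wedge_def half_wedge_def)
  qed (auto intro!: continuous_intros)
  then show ?thesis by simp
qed

lemma div_sqrt_le_of_linear_lower_bound:
  fixes k w W x D :: real
  assumes "0 < k" "0 < w" "w \<le> W" "x < 1" "k * w * (1 - x) \<le> D"
  shows "w / sqrt D \<le> sqrt W / sqrt k / sqrt (1 - x)"
proof -
  have pos: "0 < k * w * (1 - x)" using assms by simp
  then have "0 < D" using assms by linarith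
  have "w / sqrt D \<le> w / sqrt (k * w * (1 - x))"
    using assms pos \<open>0 < D\<close> by (intro divide_left_mono) auto
  also have "\<dots> = sqrt w / sqrt k / sqrt (1 - x)"
  proof -
    have "sqrt w / sqrt k / sqrt (1 - x) * sqrt (k * w * (1 - x)) = w"
      using assms by (simp add: real_sqrt_mult)
    then show ?thesis using pos by (auto simp: divide_eq_eq)
  qed
  also have "\<dots> \<le> sqrt W / sqrt k / sqrt (1 - x)"
    using assms by (intro divide_right_mono) auto
  finally show ?thesis .
qed

text \<open>With \<open>y = a t\<close>, \<open>ys = a s\<close>, \<open>T = a \<tau>\<close> this bounds the integrand of \<open>f\<close>: for small \<open>y\<close>
  the excess is \<open>O(y\<^sup>2)\<close>, which absorbs the singularity \<open>K / y\<close> at \<open>t = 0\<close>.\<close>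
lemma sqrt_ratio_excess_le:
  fixes y ys T K :: real
  assumes y: "0 < y" "0 \<le> ys" "ys \<le> y" "y < T" and K: "0 \<le> K"
  shows "K / y * (sqrt (T\<^sup>2 - ys\<^sup>2) / sqrt (T\<^sup>2 - y\<^sup>2) - 1) \<le> 2 * K / T + sqrt 2 * K / sqrt (T\<^sup>2 - y\<^sup>2)"
proof -
  define P Q where "P = T\<^sup>2 - ys\<^sup>2" and "Q = T\<^sup>2 - y\<^sup>2"
  have Q: "0 < Q" using y by (simp add: Q_def power_strict_mono)
  have QP: "Q \<le> P" "P \<le> T\<^sup>2" using y by (simp_all add: P_def Q_def power_mono)
  have excess_nonneg: "0 \<le> sqrt P / sqrt Q - 1" using Q QP by (simp add: le_divide_eq_1)
  have K_nonneg: "0 \<le> 2 * K / T" "0 \<le> sqrt 2 * K / sqrt Q" using y K Q by auto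
  show ?thesis
  proof (cases "y\<^sup>2 \<le> T\<^sup>2 / 2")
    case True
    have "sqrt P / sqrt Q = sqrt (P / Q)" by (simp add: real_sqrt_divide)
    also have "\<dots> \<le> P / Q"
    proof -
      have "1 \<le> sqrt (P / Q)" using real_sqrt_ge_one QP Q by (simp add: le_divide_eq_1)
      from mult_left_mono[OF this, of "sqrt (P / Q)"] show ?thesis using QP Q by simp
    qed
    finally have "sqrt P / sqrt Q - 1 \<le> P / Q - 1" by simp
    also have "\<dots> = (y\<^sup>2 - ys\<^sup>2) / Q" using Q by (simp add: P_def Q_def field_simps)
    also have "\<dots> \<le> y\<^sup>2 / Q" using Q by (intro divide_right_mono) auto
    also have "\<dots> \<le> y\<^sup>2 / (T\<^sup>2 / 2)" using True Q y by (intro divide_left_mono) (auto simp: Q_def)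
    finally have "K / y * (sqrt P / sqrt Q - 1) \<le> K / y * (y\<^sup>2 / (T\<^sup>2 / 2))"
      using y K by (intro mult_left_mono) auto
    also have "\<dots> = 2 * K / T * (y / T)" using y by (simp add: power2_eq_square)
    also have "\<dots> \<le> 2 * K / T" using y K by (intro mult_left_le) auto
    finally show ?thesis using K_nonneg by (simp add: P_def Q_def)
  next
    case False
    then have "T\<^sup>2 < (sqrt 2 * y)\<^sup>2" by (simp add: power_mult_distrib)
    from power_less_imp_less_base[OF this] have "T < sqrt 2 * y" using y by simp
    then have "K * T \<le> K * (sqrt 2 * y)" using K by (intro mult_left_mono) auto
    then have "K / y \<le> sqrt 2 * K / T" using y by (simp add: field_simps)
    moreover have "sqrt P / sqrt Q \<le> T / sqrt Q"
      using QP Q y real_sqrt_le_mono[OF QP(2)] by (intro divide_right_mono) auto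
    then have "sqrt P / sqrt Q - 1 \<le> T / sqrt Q" by simp
    ultimately have "K / y * (sqrt P / sqrt Q - 1) \<le> sqrt 2 * K / T * (T / sqrt Q)"
      using excess_nonneg y K by (intro mult_mono) auto
    then show ?thesis using K_nonneg y by (simp add: P_def Q_def)
  qed
qed

locale regular_scale =
  fixes a :: "real \<Rightarrow> real"
  assumes regular: "regular_scale_factor a"
begin

lemma a_zero: "a 0 = 0" and a_nonneg: "t \<ge> 0 \<Longrightarrow> a t \<ge> 0"
  and strict_mono_a: "strict_mono_on {0..} a" and continuous_on_a: "continuous_on {0..} a"
  and has_deriv_a: "t > 0 \<Longrightarrow> (a has_real_derivative deriv a t) (at t)"
  and has_deriv_deriv_a: "t > 0 \<Longrightarrow> (deriv a has_real_derivative deriv (deriv a) t) (at t)"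
  and continuous_on_deriv2: "continuous_on {0<..} (deriv (deriv a))"
  and deriv_nonzero: "t > 0 \<Longrightarrow> deriv a t \<noteq> 0"
  and acceleration_le: "t > 0 \<Longrightarrow> a t * deriv (deriv a) t / (deriv a t)\<^sup>2 \<le> 1"
  using regular unfolding regular_scale_factor_def by auto

lemma a_less: "0 \<le> x \<Longrightarrow> x < y \<Longrightarrow> a x < a y"
  using strict_mono_a by (auto simp: strict_mono_on_def)

lemma a_le: "0 \<le> x \<Longrightarrow> x \<le> y \<Longrightarrow> a x \<le> a y"
  using a_less by (cases "x = y") (auto intro: less_imp_le)

lemma a_pos: "t > 0 \<Longrightarrow> a t > 0"
  using a_less[of 0 t] a_zero by simp

lemma deriv_pos:
  assumes t: "t > 0"
  shows "deriv a t > 0"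
proof (rule ccontr)
  assume "\<not> deriv a t > 0"
  with deriv_nonzero[OF t] have "deriv a t < 0" by simp
  from DERIV_neg_dec_right[OF has_deriv_a[OF t] this] obtain d where "d > 0"
    and "\<forall>h>0. h < d \<longrightarrow> a t > a (t + h)" by blast
  then have "a (t + d/2) < a t" by auto
  moreover have "a t < a (t + d/2)" using a_less[of t "t + d/2"] t \<open>d > 0\<close> by simp
  ultimately show False by simp
qed

lemma continuous_on_aext: "continuous_on UNIV (aext a)"
  unfolding aext_def
  by (rule continuous_on_compose2[OF continuous_on_a]) (auto intro: continuous_intros)

lemma continuous_on_aext_comp: "continuous_on S g \<Longrightarrow> continuous_on S (\<lambda>x. aext a (g x))"
  using continuous_on_compose2[OF continuous_on_aext, of S g] by auto

lemma continuous_on_a_comp: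
  "continuous_on S g \<Longrightarrow> (\<And>x. x \<in> S \<Longrightarrow> g x \<ge> 0) \<Longrightarrow> continuous_on S (\<lambda>x. a (g x))"
  using continuous_on_compose2[OF continuous_on_a, of S g] by auto

lemma continuous_on_deriv_comp:
  "continuous_on S g \<Longrightarrow> (\<And>x. x \<in> S \<Longrightarrow> g x > 0) \<Longrightarrow> continuous_on S (\<lambda>x. deriv a (g x))"
proof -
  assume g: "continuous_on S g" and pos: "\<And>x. x \<in> S \<Longrightarrow> g x > 0"
  have "continuous_on {0<..} (deriv a)"
    using has_deriv_deriv_a by (intro continuous_at_imp_continuous_on) (auto intro: DERIV_isCont)
  then show ?thesis using continuous_on_compose2[OF _ g, of "{0<..}"] pos by auto
qed

lemma continuous_on_deriv2_comp:
  "continuous_on S g \<Longrightarrow> (\<And>x. x \<in> S \<Longrightarrow> g x > 0) \<Longrightarrow> continuous_on S (\<lambda>x. deriv (deriv a) (g x))"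
  using continuous_on_compose2[OF continuous_on_deriv2, of S g] by auto

text \<open>The derivative of \<open>a\<close> may vanish at \<open>0\<close>, so near \<open>u = 0\<close> the bound comes from monotonicity
  rather than from the mean value theorem.\<close>
lemma a_diff_ge_linear:
  assumes "0 < \<alpha>" "\<alpha> \<le> \<beta>"
  obtains c where "c > 0" "\<And>\<tau> u. \<tau> \<in> {\<alpha>..\<beta>} \<Longrightarrow> u \<in> {0..\<tau>} \<Longrightarrow> c * (\<tau> - u) \<le> a \<tau> - a u"
proof -
  have "continuous_on {\<alpha>/2..\<beta>} (\<lambda>x. deriv a x)"
    using assms by (intro continuous_on_deriv_comp continuous_on_id) auto
  from continuous_attains_inf[OF compact_Icc _ this] assms
  obtain z where z: "z \<in> {\<alpha>/2..\<beta>}" and z_min: "\<And>y. y \<in> {\<alpha>/2..\<beta>} \<Longrightarrow> deriv a z \<le> deriv a y"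
    by auto
  define c where "c = min (deriv a z) ((a \<alpha> - a (\<alpha>/2)) / \<beta>)"
  have "c > 0" unfolding c_def using deriv_pos z a_less[of "\<alpha>/2" \<alpha>] assms by auto
  moreover have "c * (\<tau> - u) \<le> a \<tau> - a u" if \<tau>: "\<tau> \<in> {\<alpha>..\<beta>}" and u: "u \<in> {0..\<tau>}" for \<tau> u
  proof (cases "u < \<alpha>/2")
    case True
    have "c * (\<tau> - u) \<le> ((a \<alpha> - a (\<alpha>/2)) / \<beta>) * \<beta>"
      using \<open>c > 0\<close> \<tau> u assms by (intro mult_mono) (auto simp: c_def)
    also have "\<dots> \<le> a \<tau> - a u"
      using a_le[of \<alpha> \<tau>] a_le[of u "\<alpha>/2"] \<tau> u True assms by auto
    finally show ?thesis .
  next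
    case False
    show ?thesis
    proof (cases "u = \<tau>")
      case False
      with u have "u < \<tau>" by auto
      have "\<And>x. u \<le> x \<Longrightarrow> x \<le> \<tau> \<Longrightarrow> (a has_real_derivative deriv a x) (at x)"
        using has_deriv_a \<open>\<not> u < \<alpha>/2\<close> assms by auto
      from MVT2[OF \<open>u < \<tau>\<close> this] obtain \<xi>
        where \<xi>: "u < \<xi>" "\<xi> < \<tau>" and eq: "a \<tau> - a u = (\<tau> - u) * deriv a \<xi>"
        by blast
      have "c \<le> deriv a \<xi>" using z_min[of \<xi>] \<xi> \<open>\<not> u < \<alpha>/2\<close> \<tau> by (auto simp: c_def)
      then show ?thesis using eq \<open>u < \<tau>\<close> by (simp add: mult.commute mult_right_mono)
    qed simp
  qed
  ultimately show ?thesis using that by blast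
qed

lemma sq_diff_ge_linear:
  assumes "0 < \<alpha>" "\<alpha> \<le> \<beta>"
  obtains k where "k > 0"
    "\<And>\<tau> t. \<tau> \<in> {\<alpha>..\<beta>} \<Longrightarrow> t \<in> {0..\<tau>} \<Longrightarrow> k * (\<tau> - t) \<le> (a \<tau>)\<^sup>2 - (a t)\<^sup>2"
proof -
  obtain c where c: "c > 0" "\<And>\<tau> u. \<tau> \<in> {\<alpha>..\<beta>} \<Longrightarrow> u \<in> {0..\<tau>} \<Longrightarrow> c * (\<tau> - u) \<le> a \<tau> - a u"
    using a_diff_ge_linear[OF assms] by blast
  have "a \<alpha> * c * (\<tau> - t) \<le> (a \<tau>)\<^sup>2 - (a t)\<^sup>2" if "\<tau> \<in> {\<alpha>..\<beta>}" "t \<in> {0..\<tau>}" for \<tau> t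
  proof -
    have "a \<alpha> \<le> a \<tau> + a t" using a_le[of \<alpha> \<tau>] a_nonneg[of t] assms that by auto
    then have "a \<alpha> * (c * (\<tau> - t)) \<le> (a \<tau> + a t) * (a \<tau> - a t)"
      using c that a_pos[of \<alpha>] assms by (intro mult_mono) auto
    then show ?thesis by (simp add: power2_eq_square algebra_simps)
  qed
  moreover have "a \<alpha> * c > 0" using a_pos[of \<alpha>] assms c by simp
  ultimately show ?thesis using that by blast
qed

end

section \<open>The integral \<open>rho_int\<close> and its inverse \<open>t0\<close>\<close>

definition rho_integrand :: "(real \<Rightarrow> real) \<Rightarrow> real \<Rightarrow> real \<Rightarrow> real" where
  "rho_integrand a \<tau> t = aext a t / sqrt ((aext a \<tau>)\<^sup>2 - (aext a t)\<^sup>2)"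

lemma rho_int_eq_integral: "rho_int a \<tau> s = integral {s..\<tau>} (rho_integrand a \<tau>)"
  by (simp add: rho_int_def rho_integrand_def[abs_def])

context regular_scale
begin

lemma aext_sq_diff_pos: "\<bar>t\<bar> < \<tau> \<Longrightarrow> 0 < (aext a \<tau>)\<^sup>2 - (aext a t)\<^sup>2"
  using a_less[of "\<bar>t\<bar>" \<tau>] a_nonneg[of "\<bar>t\<bar>"] by (simp add: aext_def power_strict_mono)

lemma rho_integrand_nonneg: "\<bar>t\<bar> \<le> \<tau> \<Longrightarrow> 0 \<le> rho_integrand a \<tau> t"
  using a_nonneg[of "\<bar>t\<bar>"] a_le[of "\<bar>t\<bar>" \<tau>] by (simp add: rho_integrand_def aext_def power_mono)

lemma rho_integrand_pos: "0 < \<bar>t\<bar> \<Longrightarrow> \<bar>t\<bar> < \<tau> \<Longrightarrow> 0 < rho_integrand a \<tau> t"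
  using aext_sq_diff_pos[of t \<tau>] a_pos[of "\<bar>t\<bar>"] by (simp add: rho_integrand_def aext_def)

lemma continuous_on_rho_integrand: "continuous_on wedge (\<lambda>p. rho_integrand a (fst p) (snd p))"
proof -
  have "sqrt ((aext a (fst p))\<^sup>2 - (aext a (snd p))\<^sup>2) \<noteq> 0" if "p \<in> wedge" for p
    using aext_sq_diff_pos[of "snd p" "fst p"] that by (simp add: wedge_def)
  then show ?thesis
    unfolding rho_integrand_def by (intro continuous_intros continuous_on_aext_comp) auto
qed

lemma rho_integrand_rescaled_le:
  assumes k: "k > 0" "\<And>\<tau> t. \<tau> \<in> {\<alpha>..\<beta>} \<Longrightarrow> t \<in> {0..\<tau>} \<Longrightarrow> k * (\<tau> - t) \<le> (a \<tau>)\<^sup>2 - (a t)\<^sup>2"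
    and \<tau>: "\<tau> \<in> {\<alpha>..\<beta>}" and st: "0 \<le> s" "s < \<tau>" and x: "x \<in> {0<..<1}"
  shows "\<bar>(\<tau> - s) * rho_integrand a \<tau> (s + (\<tau> - s) * x)\<bar> \<le> a \<beta> * sqrt \<beta> / sqrt k / sqrt (1 - x)"
proof -
  define t where "t = s + (\<tau> - s) * x"
  have t: "s < t" "t < \<tau>" using affine_in_open_segment[OF st(2)] x by (auto simp: t_def)
  have kD: "k * (\<tau> - s) * (1 - x) \<le> (a \<tau>)\<^sup>2 - (a t)\<^sup>2"
    using k(2)[OF \<tau>, of t] t st by (simp add: t_def algebra_simps)
  have "0 < k * (\<tau> - s) * (1 - x)" using k st x by simp
  with kD have D: "0 < (a \<tau>)\<^sup>2 - (a t)\<^sup>2" by linarith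
  from kD have "(\<tau> - s) / sqrt ((a \<tau>)\<^sup>2 - (a t)\<^sup>2) \<le> sqrt \<beta> / sqrt k / sqrt (1 - x)"
    using k \<tau> st x by (intro div_sqrt_le_of_linear_lower_bound) auto
  moreover have "0 \<le> a t" "a t \<le> a \<beta>" using a_nonneg a_le[of t \<beta>] t st \<tau> by auto
  ultimately have "a t * ((\<tau> - s) / sqrt ((a \<tau>)\<^sup>2 - (a t)\<^sup>2)) \<le> a \<beta> * (sqrt \<beta> / sqrt k / sqrt (1 - x))"
    using D st by (intro mult_mono) auto
  moreover have "0 \<le> a t * ((\<tau> - s) / sqrt ((a \<tau>)\<^sup>2 - (a t)\<^sup>2))"
    using \<open>0 \<le> a t\<close> D st by simp
  moreover have "(\<tau> - s) * rho_integrand a \<tau> t = a t * ((\<tau> - s) / sqrt ((a \<tau>)\<^sup>2 - (a t)\<^sup>2))"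
    using t st by (simp add: rho_integrand_def aext_def)
  ultimately show ?thesis by (simp add: t_def)
qed

lemma rho_integrand_dominated:
  assumes "p0 \<in> half_wedge"
  shows "\<exists>e>0. \<exists>C. \<forall>p\<in>half_wedge. dist p p0 < e \<longrightarrow> (\<forall>x\<in>{0<..<1}.
    \<bar>(fst p - snd p) * rho_integrand a (fst p) (snd p + (fst p - snd p) * x)\<bar> \<le> C / sqrt (1 - x))"
proof -
  define \<alpha> \<beta> where "\<alpha> = fst p0 / 2" and "\<beta> = 2 * fst p0"
  have \<alpha>\<beta>: "0 < \<alpha>" "\<alpha> \<le> \<beta>" using assms by (auto simp: \<alpha>_def \<beta>_def half_wedge_def)
  obtain k where k: "k > 0" "\<And>\<tau> t. \<tau> \<in> {\<alpha>..\<beta>} \<Longrightarrow> t \<in> {0..\<tau>} \<Longrightarrow> k * (\<tau> - t) \<le> (a \<tau>)\<^sup>2 - (a t)\<^sup>2"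
    using sq_diff_ge_linear[OF \<alpha>\<beta>] by blast
  have "\<bar>(fst p - snd p) * rho_integrand a (fst p) (snd p + (fst p - snd p) * x)\<bar>
      \<le> a \<beta> * sqrt \<beta> / sqrt k / sqrt (1 - x)"
    if "p \<in> half_wedge" "dist p p0 < \<alpha>" "x \<in> {0<..<1}" for p x
    using rho_integrand_rescaled_le[OF k fst_mem_if_dist_less[OF that(2)[unfolded \<alpha>_def], folded \<alpha>_def \<beta>_def]]
      that by (simp add: half_wedge_def)
  then show ?thesis using \<alpha>\<beta> by blast
qed

lemma continuous_on_rho_integrand_segment:
  assumes "- \<tau> < c" "d < \<tau>"
  shows "continuous_on {c..d} (rho_integrand a \<tau>)"
proof -
  have "(\<lambda>t. (\<tau>, t)) ` {c..d} \<subseteq> wedge" using assms by (auto simp: wedge_def)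
  from continuous_on_compose2[OF continuous_on_rho_integrand _ this] show ?thesis
    by (simp add: continuous_on_Pair continuous_on_const continuous_on_id)
qed

lemma
  shows rho_integrand_integrable_half_wedge:
      "p \<in> half_wedge \<Longrightarrow> rho_integrand a (fst p) integrable_on {snd p..fst p}"
    and continuous_on_rho_int_half_wedge:
      "continuous_on half_wedge (\<lambda>p. rho_int a (fst p) (snd p))"
proof -
  have "(\<lambda>(p, t). (fst p, t)) ` {(p, t). p \<in> half_wedge \<and> snd p < t \<and> t < fst p} \<subseteq> wedge"
    by (auto simp: wedge_def half_wedge_def)
  from continuous_on_compose2[OF continuous_on_rho_integrand _ this]
  have cont: "continuous_on {(p, t). p \<in> half_wedge \<and> snd p < t \<and> t < fst p}
      (\<lambda>(p, t). rho_integrand a (fst p) t)"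
    by (simp add: case_prod_beta continuous_on_Pair continuous_on_fst continuous_on_snd continuous_on_id)
  have U: "\<And>p. p \<in> half_wedge \<Longrightarrow> snd p < fst p" by (simp add: half_wedge_def)
  show "p \<in> half_wedge \<Longrightarrow> rho_integrand a (fst p) integrable_on {snd p..fst p}"
    by (rule integrable_on_segment_dominated[OF U cont rho_integrand_dominated])
  show "continuous_on half_wedge (\<lambda>p. rho_int a (fst p) (snd p))"
    using continuous_on_integral_segment_dominated[OF U cont rho_integrand_dominated]
    by (simp add: rho_int_eq_integral)
qed

lemma rho_integrand_integrable:
  assumes "\<bar>s\<bar> < \<tau>"
  shows "rho_integrand a \<tau> integrable_on {s..\<tau>}"
proof (cases "0 \<le> s")
  case True
  then show ?thesis using rho_integrand_integrable_half_wedge[of "(\<tau>, s)"] assms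
    by (simp add: half_wedge_def)
next
  case False
  have "rho_integrand a \<tau> integrable_on {s..0}"
    using assms by (intro integrable_continuous_interval continuous_on_rho_integrand_segment) auto
  moreover have "rho_integrand a \<tau> integrable_on {0..\<tau>}"
    using rho_integrand_integrable_half_wedge[of "(\<tau>, 0)"] assms by (simp add: half_wedge_def)
  ultimately show ?thesis
    using False assms Henstock_Kurzweil_Integration.integrable_combine[where a = s and c = 0 and b = \<tau>]
    by simp
qed

lemma rho_int_combine:
  "\<bar>s\<bar> < \<tau> \<Longrightarrow> s \<le> s' \<Longrightarrow> s' \<le> \<tau> \<Longrightarrow>
    rho_int a \<tau> s = integral {s..s'} (rho_integrand a \<tau>) + rho_int a \<tau> s'"
  unfolding rho_int_eq_integral
  using Henstock_Kurzweil_Integration.integral_combine[OF _ _ rho_integrand_integrable] by simp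

lemma rho_integrand_even: "rho_integrand a \<tau> (- t) = rho_integrand a \<tau> t"
  by (simp add: rho_integrand_def aext_def)

lemma rho_int_reflect:
  assumes "0 \<le> s" "s < \<tau>"
  shows "rho_int a \<tau> (- s) = 2 * rho_int a \<tau> 0 - rho_int a \<tau> s"
proof -
  have "integral {- s..0} (rho_integrand a \<tau>) = integral {0..s} (rho_integrand a \<tau>)"
    using Henstock_Kurzweil_Integration.integral_reflect_real[where a = 0 and b = s and f = "rho_integrand a \<tau>"]
    by (simp add: rho_integrand_even)
  then show ?thesis
    using rho_int_combine[of "- s" \<tau> 0] rho_int_combine[of 0 \<tau> s] assms by simp
qed

lemma continuous_on_rho_int: "continuous_on wedge (\<lambda>p. rho_int a (fst p) (snd p))"
proof (rule continuous_on_eq[OF continuous_on_wedge_reflect[OF continuous_on_rho_int_half_wedge]])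
  fix p assume "p \<in> wedge"
  then show "(if 0 \<le> snd p then rho_int a (fst p) (snd p)
      else 2 * rho_int a (fst (fst p, 0::real)) (snd (fst p, 0::real))
        - rho_int a (fst (fst p, - snd p)) (snd (fst p, - snd p))) = rho_int a (fst p) (snd p)"
    using rho_int_reflect[of "- snd p" "fst p"] by (auto simp: wedge_def)
qed

lemma rho_int_strict_decreasing:
  assumes "\<bar>s\<bar> < \<tau>" "\<bar>s'\<bar> < \<tau>" "s < s'"
  shows "rho_int a \<tau> s' < rho_int a \<tau> s"
proof -
  have cont: "continuous_on {s..s'} (rho_integrand a \<tau>)"
    using assms by (intro continuous_on_rho_integrand_segment) auto
  have nonneg: "\<And>t. t \<in> {s..s'} \<Longrightarrow> 0 \<le> rho_integrand a \<tau> t"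
    using assms by (intro rho_integrand_nonneg) auto
  have "\<exists>t\<in>{s..s'}. rho_integrand a \<tau> t \<noteq> 0"
  proof (cases "s = 0")
    case True
    then show ?thesis using rho_integrand_pos[of s' \<tau>] assms by (intro bexI[of _ s']) auto
  next
    case False
    then show ?thesis using rho_integrand_pos[of s \<tau>] assms by (intro bexI[of _ s]) auto
  qed
  then have "integral {s..s'} (rho_integrand a \<tau>) \<noteq> 0"
    using integral_eq_0_iff[OF cont assms(3) nonneg] by auto
  moreover have "0 \<le> integral {s..s'} (rho_integrand a \<tau>)"
    using integral_nonneg[OF integrable_continuous_interval[OF cont] nonneg] by simp
  ultimately show ?thesis using rho_int_combine[of s \<tau> s'] assms by simp
qed

lemma rho_int_attains_nonneg:
  assumes "0 < \<tau>" "0 < \<rho>" "\<rho> \<le> rho_int a \<tau> 0"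
  obtains s where "0 \<le> s" "s < \<tau>" "rho_int a \<tau> s = \<rho>"
proof -
  have "continuous_on {0..\<tau>} (rho_int a \<tau>)"
    unfolding rho_int_eq_integral
    using assms by (intro indefinite_integral_continuous_1' rho_integrand_integrable) auto
  moreover have "rho_int a \<tau> \<tau> = 0" by (simp add: rho_int_def)
  ultimately obtain s where "0 \<le> s" "s \<le> \<tau>" "rho_int a \<tau> s = \<rho>"
    using IVT2'[of "rho_int a \<tau>" \<tau> \<rho> 0] assms by auto
  moreover have "s \<noteq> \<tau>" using \<open>rho_int a \<tau> s = \<rho>\<close> \<open>rho_int a \<tau> \<tau> = 0\<close> assms by auto
  ultimately show ?thesis using that by auto
qed

lemma rho_int_attains:
  assumes "0 < \<tau>" "0 < \<rho>" "\<rho> < 2 * rho_int a \<tau> 0"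
  obtains s where "\<bar>s\<bar> < \<tau>" "rho_int a \<tau> s = \<rho>"
proof (cases "\<rho> \<le> rho_int a \<tau> 0")
  case True
  then show ?thesis using rho_int_attains_nonneg[OF assms(1,2)] that by (metis abs_of_nonneg)
next
  case False
  then obtain s where s: "0 \<le> s" "s < \<tau>" "rho_int a \<tau> s = 2 * rho_int a \<tau> 0 - \<rho>"
    using rho_int_attains_nonneg[OF assms(1), of "2 * rho_int a \<tau> 0 - \<rho>"] assms by auto
  then have "rho_int a \<tau> (- s) = \<rho>" using rho_int_reflect by simp
  with s show ?thesis using that[of "- s"] by simp
qed

lemma t0_solves:
  assumes "(\<tau>, \<rho>) \<in> domD a"
  shows "\<bar>t0 a \<tau> \<rho>\<bar> < \<tau>" "rho_int a \<tau> (t0 a \<tau> \<rho>) = \<rho>"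
proof -
  have \<tau>: "0 < \<tau>" and \<rho>: "0 < \<rho>" "\<rho> < 2 * rho_int a \<tau> 0"
    using assms by (auto simp: domD_def rho_M_def)
  obtain s where s: "\<bar>s\<bar> < \<tau>" "rho_int a \<tau> s = \<rho>" using rho_int_attains[OF \<tau> \<rho>] .
  have "\<exists>!s. s \<in> {-\<tau><..<\<tau>} \<and> \<rho> = rho_int a \<tau> s"
  proof (rule ex1I[of _ s])
    show "s \<in> {-\<tau><..<\<tau>} \<and> \<rho> = rho_int a \<tau> s" using s by auto
    fix s' assume s': "s' \<in> {-\<tau><..<\<tau>} \<and> \<rho> = rho_int a \<tau> s'"
    show "s' = s"
      using rho_int_strict_decreasing[of s \<tau> s'] rho_int_strict_decreasing[of s' \<tau> s] s s'
      by (cases s s' rule: linorder_cases) (auto simp: abs_less_iff)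
  qed
  from theI'[OF this] show "\<bar>t0 a \<tau> \<rho>\<bar> < \<tau>" "rho_int a \<tau> (t0 a \<tau> \<rho>) = \<rho>"
    unfolding t0_def by auto
qed

lemma continuous_on_t0: "continuous_on (domD a) (\<lambda>q. t0 a (fst q) (snd q))"
proof (rule continuous_on_implicit_decreasing[OF open_wedge continuous_on_rho_int])
  show "rho_int a (fst (\<tau>, s')) (snd (\<tau>, s')) < rho_int a (fst (\<tau>, s)) (snd (\<tau>, s))"
    if "(\<tau>, s) \<in> wedge" "(\<tau>, s') \<in> wedge" "s < s'" for \<tau> s s'
    using rho_int_strict_decreasing that by (simp add: wedge_def)
  show "(fst q, t0 a (fst q) (snd q)) \<in> wedge \<and>
      rho_int a (fst (fst q, t0 a (fst q) (snd q))) (snd (fst q, t0 a (fst q) (snd q))) = snd q"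
    if "q \<in> domD a" for q
    using t0_solves[of "fst q" "snd q"] that by (simp add: wedge_def)
qed

end

section \<open>The function \<open>f\<close>\<close>

definition f_integrand :: "(real \<Rightarrow> real) \<Rightarrow> real \<Rightarrow> real \<Rightarrow> real \<Rightarrow> real" where
  "f_integrand a \<tau> s t = deriv (deriv a) t / (deriv a t)\<^sup>2 *
     (sqrt ((a \<tau>)\<^sup>2 - (a s)\<^sup>2) / sqrt ((a \<tau>)\<^sup>2 - (a t)\<^sup>2) - 1)"

lemma f_pos_eq_integral: "f_pos a \<tau> s = integral {s..\<tau>} (f_integrand a \<tau> s)"
  by (simp add: f_pos_def f_integrand_def[abs_def])

locale strongly_regular_scale =
  fixes a :: "real \<Rightarrow> real"
  assumes strongly_regular: "strongly_regular_scale_factor a"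

sublocale strongly_regular_scale \<subseteq> regular_scale
  using strongly_regular by unfold_locales (simp add: strongly_regular_scale_factor_def)

context strongly_regular_scale
begin

lemma acceleration_bound:
  obtains K where "K \<ge> 0" "\<And>t. t > 0 \<Longrightarrow> \<bar>deriv (deriv a) t / (deriv a t)\<^sup>2\<bar> \<le> K / a t"
proof -
  obtain K where K: "K \<ge> 1" and lower: "\<And>t. t > 0 \<Longrightarrow> - K \<le> a t * deriv (deriv a) t / (deriv a t)\<^sup>2"
    using strongly_regular unfolding strongly_regular_scale_factor_def by auto
  have "\<bar>deriv (deriv a) t / (deriv a t)\<^sup>2\<bar> \<le> K / a t" if t: "t > 0" for t
  proof -
    have "\<bar>a t * (deriv (deriv a) t / (deriv a t)\<^sup>2)\<bar> \<le> K"
      using lower[OF t] acceleration_le[OF t] K by (simp add: abs_le_iff)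
    then show ?thesis using a_pos[OF t] by (simp add: abs_mult field_simps)
  qed
  with K show ?thesis by (intro that[of K]) auto
qed

lemma continuous_on_f_integrand:
  "continuous_on {(p, t). p \<in> half_wedge \<and> snd p < t \<and> t < fst p} (\<lambda>(p, t). f_integrand a (fst p) (snd p) t)"
proof -
  have "sqrt ((a (fst p))\<^sup>2 - (a t)\<^sup>2) \<noteq> 0" "(deriv a t)\<^sup>2 \<noteq> 0"
    if "p \<in> half_wedge" "snd p < t" "t < fst p" for p t
    using aext_sq_diff_pos[of t "fst p"] deriv_pos[of t] that by (auto simp: half_wedge_def aext_def)
  then show ?thesis
    unfolding f_integrand_def case_prod_beta
    by (intro continuous_intros continuous_on_a_comp continuous_on_deriv_comp continuous_on_deriv2_comp)
      (auto simp: half_wedge_def)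
qed

lemma f_integrand_rescaled_le:
  assumes K: "K \<ge> 0" "\<And>t. t > 0 \<Longrightarrow> \<bar>deriv (deriv a) t / (deriv a t)\<^sup>2\<bar> \<le> K / a t"
    and k: "k > 0" "\<And>\<tau> t. \<tau> \<in> {\<alpha>..\<beta>} \<Longrightarrow> t \<in> {0..\<tau>} \<Longrightarrow> k * (\<tau> - t) \<le> (a \<tau>)\<^sup>2 - (a t)\<^sup>2"
    and \<alpha>: "0 < \<alpha>" and \<tau>: "\<tau> \<in> {\<alpha>..\<beta>}" and st: "0 \<le> s" "s < \<tau>" and x: "x \<in> {0<..<1}"
  shows "\<bar>(\<tau> - s) * f_integrand a \<tau> s (s + (\<tau> - s) * x)\<bar>
    \<le> (\<beta> * (2 * K / a \<alpha>) + sqrt 2 * K * (sqrt \<beta> / sqrt k)) / sqrt (1 - x)"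
proof -
  define t where "t = s + (\<tau> - s) * x"
  have t: "s < t" "t < \<tau>" using affine_in_open_segment[OF st(2)] x by (auto simp: t_def)
  define Q where "Q = (a \<tau>)\<^sup>2 - (a t)\<^sup>2"
  have kQ: "k * (\<tau> - s) * (1 - x) \<le> Q"
    using k(2)[OF \<tau>, of t] t st by (simp add: Q_def t_def algebra_simps)
  have y: "0 < a t" "0 \<le> a s" "a s \<le> a t" "a t < a \<tau>" "0 < a \<alpha>" "a \<alpha> \<le> a \<tau>"
    using a_pos[of t] a_nonneg[of s] a_le[of s t] a_less[of t \<tau>] a_pos[of \<alpha>] a_le[of \<alpha> \<tau>] t st \<tau> \<alpha>
    by auto
  define excess where "excess = sqrt ((a \<tau>)\<^sup>2 - (a s)\<^sup>2) / sqrt Q - 1"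
  have "0 \<le> excess"
    using y by (simp add: excess_def Q_def le_divide_eq_1 power_mono power_strict_mono)
  have "\<bar>f_integrand a \<tau> s t\<bar> = \<bar>deriv (deriv a) t / (deriv a t)\<^sup>2\<bar> * excess"
    using \<open>0 \<le> excess\<close> by (simp add: f_integrand_def excess_def Q_def abs_mult)
  also have "\<dots> \<le> K / a t * excess"
    using K(2)[of t] t st \<open>0 \<le> excess\<close> by (intro mult_right_mono) auto
  also have "\<dots> \<le> 2 * K / a \<tau> + sqrt 2 * K / sqrt Q"
    unfolding excess_def Q_def using y K by (intro sqrt_ratio_excess_le) auto
  also have "\<dots> \<le> 2 * K / a \<alpha> + sqrt 2 * K / sqrt Q"
    using y K by (simp add: divide_left_mono)
  finally have "(\<tau> - s) * \<bar>f_integrand a \<tau> s t\<bar> \<le> (\<tau> - s) * (2 * K / a \<alpha> + sqrt 2 * K / sqrt Q)"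
    using st by (intro mult_left_mono) auto
  also have "\<dots> = (\<tau> - s) * (2 * K / a \<alpha>) + sqrt 2 * K * ((\<tau> - s) / sqrt Q)"
    by (simp add: algebra_simps)
  also have "\<dots> \<le> \<beta> * (2 * K / a \<alpha>) + sqrt 2 * K * (sqrt \<beta> / sqrt k / sqrt (1 - x))"
  proof (rule add_mono)
    show "(\<tau> - s) * (2 * K / a \<alpha>) \<le> \<beta> * (2 * K / a \<alpha>)"
      using st \<tau> K y by (intro mult_right_mono) auto
    show "sqrt 2 * K * ((\<tau> - s) / sqrt Q) \<le> sqrt 2 * K * (sqrt \<beta> / sqrt k / sqrt (1 - x))"
      using K k \<tau> st x kQ by (intro mult_left_mono div_sqrt_le_of_linear_lower_bound) auto
  qed
  also have "\<dots> \<le> (\<beta> * (2 * K / a \<alpha>) + sqrt 2 * K * (sqrt \<beta> / sqrt k)) / sqrt (1 - x)"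
  proof -
    have "\<beta> * (2 * K / a \<alpha>) \<le> \<beta> * (2 * K / a \<alpha>) / sqrt (1 - x)"
      using K y \<alpha> \<tau> x by (simp add: le_divide_eq real_sqrt_le_1_iff mult_left_le)
    then show ?thesis by (simp add: add_divide_distrib)
  qed
  finally show ?thesis using st by (simp add: abs_mult t_def)
qed

lemma f_integrand_dominated:
  assumes "p0 \<in> half_wedge"
  shows "\<exists>e>0. \<exists>C. \<forall>p\<in>half_wedge. dist p p0 < e \<longrightarrow> (\<forall>x\<in>{0<..<1}.
    \<bar>(fst p - snd p) * f_integrand a (fst p) (snd p) (snd p + (fst p - snd p) * x)\<bar> \<le> C / sqrt (1 - x))"
proof -
  define \<alpha> \<beta> where "\<alpha> = fst p0 / 2" and "\<beta> = 2 * fst p0"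
  have \<alpha>\<beta>: "0 < \<alpha>" "\<alpha> \<le> \<beta>" using assms by (auto simp: \<alpha>_def \<beta>_def half_wedge_def)
  obtain k where k: "k > 0" "\<And>\<tau> t. \<tau> \<in> {\<alpha>..\<beta>} \<Longrightarrow> t \<in> {0..\<tau>} \<Longrightarrow> k * (\<tau> - t) \<le> (a \<tau>)\<^sup>2 - (a t)\<^sup>2"
    using sq_diff_ge_linear[OF \<alpha>\<beta>] by blast
  obtain K where K: "K \<ge> 0" "\<And>t. t > 0 \<Longrightarrow> \<bar>deriv (deriv a) t / (deriv a t)\<^sup>2\<bar> \<le> K / a t"
    using acceleration_bound by blast
  define C where "C = \<beta> * (2 * K / a \<alpha>) + sqrt 2 * K * (sqrt \<beta> / sqrt k)"
  have "\<bar>(fst p - snd p) * f_integrand a (fst p) (snd p) (snd p + (fst p - snd p) * x)\<bar>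
      \<le> C / sqrt (1 - x)"
    if "p \<in> half_wedge" "dist p p0 < \<alpha>" "x \<in> {0<..<1}" for p x
    using f_integrand_rescaled_le[OF K k \<alpha>\<beta>(1)
        fst_mem_if_dist_less[OF that(2)[unfolded \<alpha>_def], folded \<alpha>_def \<beta>_def]]
      that unfolding C_def by (simp add: half_wedge_def)
  then show ?thesis using \<alpha>\<beta> by blast
qed

lemma continuous_on_f: "continuous_on wedge (\<lambda>p. f a (fst p) (snd p))"
proof -
  have "continuous_on half_wedge (\<lambda>p. f_pos a (fst p) (snd p))"
    using continuous_on_integral_segment_dominated[where F = "\<lambda>p. f_integrand a (fst p) (snd p)",
        OF _ continuous_on_f_integrand f_integrand_dominated]
    by (simp add: half_wedge_def f_pos_eq_integral)
  from continuous_on_wedge_reflect[OF this] show ?thesis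
    by (rule continuous_on_eq) (simp add: f_def)
qed

end

theorem theorem5p4:
  fixes a :: "real \<Rightarrow> real"
  assumes "strongly_regular_scale_factor a"
  shows "continuous_on (domD a) (g_tautau a)"
proof -
  interpret strongly_regular_scale a by (rule strongly_regular_scale.intro[OF assms])
  have "(\<lambda>q. (fst q, t0 a (fst q) (snd q))) ` domD a \<subseteq> wedge"
    using t0_solves by (auto simp: wedge_def)
  from continuous_on_compose2[OF continuous_on_f _ this]
  have "continuous_on (domD a) (\<lambda>q. f a (fst q) (t0 a (fst q) (snd q)))"
    by (simp add: continuous_on_fst continuous_on_Pair continuous_on_t0 continuous_on_id)
  moreover have "continuous_on (domD a) (\<lambda>q. deriv a (fst q))"
    by (intro continuous_on_deriv_comp continuous_intros) (auto simp: domD_def)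
  ultimately show ?thesis
    unfolding g_tautau_def case_prod_beta by (intro continuous_intros)
qed

end
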